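(* Let $(X,d)$ be a complete metric space and $(\mathbb{H}(X),h)$ the space of nonempty compact subsets of $X$ with the Hausdorff metric. For each $i\in\mathbb{N}$ let $\mathcal{F}_i=\{X; f_{1,i},\dots,f_{n_i,i}\}$ be a finite family of Lipschitz maps $f_{r,i}:X\to X$, with associated set map $\mathcal{F}_i(A)=\bigcup_{r=1}^{n_i} f_{r,i}(A)$ on $\mathbb{H}(X)$, and let $L_{\mathcal{F}_i}=\max_{1\le r\le n_i}\mathrm{Lip}(f_{r,i})$. Suppose $\lim_{k\to\infty}\prod_{i=1}^k L_{\mathcal{F}_i}=0$. Let $\Phi_k=\mathcal{F}_k\circ\cdots\circ\mathcal{F}_1$ and $\Psi_k=\mathcal{F}_1\circ\cdots\circ\mathcal{F}_k$. Then for all $A,B\in\mathbb{H}(X)$, $h(\Phi_k(A),\Phi_k(B))\to 0$ and $h(\Psi_k(A),\Psi_k(B))\to0$ as $k\to\infty$.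
   Context: The Hausdorff metric is $h(B,C)=\max\{d(B,C),d(C,B)\}$ with $d(B,C)=\sup_{b\in B}\inf_{c\in C}d(b,c)$. $\mathrm{Lip}(f)=\sup_{x\ne y}d(f(x),f(y))/d(x,y)$. *)

theory Defs
  imports "HOL-Analysis.Analysis"
begin

definition hexcess :: "'a::metric_space set \<Rightarrow> 'a set \<Rightarrow> real" where
  "hexcess B C = (SUP b\<in>B. infdist b C)"

definition hausdorff :: "'a::metric_space set \<Rightarrow> 'a set \<Rightarrow> real" where
  "hausdorff B C = max (hexcess B C) (hexcess C B)"

text \<open>Lipschitz constant Lip(f) = sup of d(f x, f y)/d(x,y) over x \<noteq> y
  (0 is added to the set only so that the value is 0 on a one-point space).\<close>
definition Lip :: "('a::metric_space \<Rightarrow> 'b::metric_space) \<Rightarrow> real" where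
  "Lip f = Sup ({0} \<union> {dist (f x) (f y) / dist x y | x y. x \<noteq> y})"

definition famap :: "(nat \<Rightarrow> nat \<Rightarrow> 'a \<Rightarrow> 'a) \<Rightarrow> (nat \<Rightarrow> nat) \<Rightarrow> nat \<Rightarrow> 'a set \<Rightarrow> 'a set" where
  "famap f n i A = (\<Union>r\<in>{1..n i}. f r i ` A)"

definition famLip :: "(nat \<Rightarrow> nat \<Rightarrow> 'a::metric_space \<Rightarrow> 'a) \<Rightarrow> (nat \<Rightarrow> nat) \<Rightarrow> nat \<Rightarrow> real" where
  "famLip f n i = Max ((\<lambda>r. Lip (f r i)) ` {1..n i})"

fun Phi :: "(nat \<Rightarrow> 'a set \<Rightarrow> 'a set) \<Rightarrow> nat \<Rightarrow> 'a set \<Rightarrow> 'a set" where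
  "Phi F 0 A = A"
| "Phi F (Suc k) A = F (Suc k) (Phi F k A)"

fun Psi :: "(nat \<Rightarrow> 'a set \<Rightarrow> 'a set) \<Rightarrow> nat \<Rightarrow> 'a set \<Rightarrow> 'a set" where
  "Psi F 0 A = A"
| "Psi F (Suc k) A = Psi F k (F (Suc k) A)"

end

theory Submission
  imports Defs
begin

text \<open>Each set map \<open>\<F>\<^sub>i\<close> is Lipschitz for the Hausdorff metric with constant \<open>L\<^sub>i\<close>:
  a point \<open>f\<^sub>r(x)\<close> of \<open>\<F>\<^sub>i(A)\<close> is within \<open>Lip(f\<^sub>r) d(x,y)\<close> of \<open>f\<^sub>r(y) \<in> \<F>\<^sub>i(B)\<close>, where
  \<open>y \<in> B\<close> is a nearest point to \<open>x\<close>, so \<open>d(x,y) \<le> h(A,B)\<close>. Composing, \<open>\<Phi>\<^sub>k\<close> and \<open>\<Psi>\<^sub>k\<close>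
  are Lipschitz with constant \<open>\<Prod>\<^sub>i\<^sub>\<le>\<^sub>k L\<^sub>i\<close>, which tends to 0.\<close>

lemma infdist_attained_compact:
  fixes C :: "'a::metric_space set"
  assumes "compact C" "C \<noteq> {}"
  obtains y where "y \<in> C" "infdist x C = dist x y"
proof -
  have "continuous_on C (dist x)" by (intro continuous_intros)
  then obtain y where y: "y \<in> C" "\<And>z. z \<in> C \<Longrightarrow> dist x y \<le> dist x z"
    using continuous_attains_inf[OF assms] by blast
  have "infdist x C \<le> dist x y" using y(1) by (rule infdist_le)
  moreover have "dist x y \<le> infdist x C"
    unfolding infdist_def using assms y by (auto intro: cINF_greatest)
  ultimately show ?thesis using that y(1) by auto
qed

lemma infdist_le_hexcess:
  fixes B C :: "'a::metric_space set"
  assumes "compact B" "x \<in> B"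
  shows "infdist x C \<le> hexcess B C"
proof -
  have "compact ((\<lambda>b. infdist b C) ` B)"
    by (intro compact_continuous_image continuous_intros assms)
  then have "bdd_above ((\<lambda>b. infdist b C) ` B)"
    by (intro bounded_imp_bdd_above compact_imp_bounded)
  then show ?thesis unfolding hexcess_def using assms by (intro cSUP_upper)
qed

lemma hexcess_leI:
  fixes B C :: "'a::metric_space set"
  assumes "B \<noteq> {}" "\<And>x. x \<in> B \<Longrightarrow> \<exists>y\<in>C. dist x y \<le> e"
  shows "hexcess B C \<le> e"
  unfolding hexcess_def using assms by (auto intro!: cSUP_least intro: infdist_le2)

lemma hausdorff_commute: "hausdorff B C = hausdorff C B"
  unfolding hausdorff_def by simp

lemma hausdorff_nonneg:
  fixes B C :: "'a::metric_space set"
  assumes "compact B" "B \<noteq> {}"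
  shows "0 \<le> hausdorff B C"
proof -
  obtain x where "x \<in> B" using assms(2) by blast
  then have "0 \<le> hexcess B C"
    using infdist_le_hexcess[OF assms(1)] infdist_nonneg order_trans by metis
  then show ?thesis unfolding hausdorff_def by linarith
qed

lemma exists_dist_le_hausdorff:
  fixes B C :: "'a::metric_space set"
  assumes "compact B" "compact C" "C \<noteq> {}" "x \<in> B"
  shows "\<exists>y\<in>C. dist x y \<le> hausdorff B C"
proof -
  obtain y where "y \<in> C" "infdist x C = dist x y"
    using infdist_attained_compact[OF assms(2,3)] by blast
  moreover have "infdist x C \<le> hausdorff B C"
    using infdist_le_hexcess[OF assms(1,4), of C] unfolding hausdorff_def by linarith
  ultimately show ?thesis by auto
qed

lemma hexcess_UN_image_le:
  fixes g :: "'i \<Rightarrow> 'a::metric_space \<Rightarrow> 'b::metric_space"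
  assumes lip: "\<And>r. r \<in> R \<Longrightarrow> L-lipschitz_on UNIV (g r)" and "R \<noteq> {}"
    and A: "compact A" "A \<noteq> {}" and B: "compact B" "B \<noteq> {}"
  shows "hexcess (\<Union>r\<in>R. g r ` A) (\<Union>r\<in>R. g r ` B) \<le> L * hausdorff A B"
proof (rule hexcess_leI)
  show "(\<Union>r\<in>R. g r ` A) \<noteq> {}" using \<open>R \<noteq> {}\<close> A(2) by blast
  fix z assume "z \<in> (\<Union>r\<in>R. g r ` A)"
  then obtain r x where r: "r \<in> R" and x: "x \<in> A" and z: "z = g r x" by blast
  obtain y where y: "y \<in> B" "dist x y \<le> hausdorff A B"
    using exists_dist_le_hausdorff[OF A(1) B x] by blast
  have "dist z (g r y) \<le> L * dist x y"
    using lipschitz_onD[OF lip[OF r]] z by simp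
  also have "\<dots> \<le> L * hausdorff A B"
    using y(2) lipschitz_on_nonneg[OF lip[OF r]] by (rule mult_left_mono)
  finally show "\<exists>w\<in>(\<Union>r\<in>R. g r ` B). dist z w \<le> L * hausdorff A B"
    using y(1) r by blast
qed

lemma hausdorff_UN_image_le:
  fixes g :: "'i \<Rightarrow> 'a::metric_space \<Rightarrow> 'b::metric_space"
  assumes "\<And>r. r \<in> R \<Longrightarrow> L-lipschitz_on UNIV (g r)" "R \<noteq> {}"
    and "compact A" "A \<noteq> {}" "compact B" "B \<noteq> {}"
  shows "hausdorff (\<Union>r\<in>R. g r ` A) (\<Union>r\<in>R. g r ` B) \<le> L * hausdorff A B"
  using hexcess_UN_image_le[OF assms] hexcess_UN_image_le[OF assms(1,2,5,6,3,4)]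
  unfolding hausdorff_def[of "\<Union>r\<in>R. g r ` A"] hausdorff_commute[of B A] by simp

text \<open>The 0 in the definition of \<open>Lip\<close> supplies the nonnegativity that
  \<open>lipschitz_on\<close> demands.\<close>

lemma lipschitz_on_Lip:
  fixes g :: "'a::metric_space \<Rightarrow> 'b::metric_space"
  assumes "C-lipschitz_on UNIV g"
  shows "(Lip g)-lipschitz_on UNIV g"
proof -
  let ?S = "{0} \<union> {dist (g x) (g y) / dist x y | x y. x \<noteq> y}"
  have "z \<le> C" if "z \<in> ?S" for z
    using that lipschitz_on_nonneg[OF assms] lipschitz_onD[OF assms]
    by (auto simp: divide_le_eq)
  then have bdd: "bdd_above ?S" by (rule bdd_aboveI)
  show ?thesis
  proof (rule lipschitz_onI)
    show "0 \<le> Lip g" unfolding Lip_def using bdd by (intro cSup_upper) auto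
    fix x y :: 'a
    show "dist (g x) (g y) \<le> Lip g * dist x y"
    proof (cases "x = y")
      case False
      then have "dist (g x) (g y) / dist x y \<le> Lip g"
        unfolding Lip_def using bdd by (intro cSup_upper) auto
      then show ?thesis using False by (simp add: divide_le_eq mult.commute)
    qed simp
  qed
qed

locale hausdorff_lipschitz_family =
  fixes F :: "nat \<Rightarrow> 'a::metric_space set \<Rightarrow> 'a set" and L :: "nat \<Rightarrow> real"
  assumes compact_F: "\<And>i A. i \<ge> 1 \<Longrightarrow> compact A \<Longrightarrow> A \<noteq> {} \<Longrightarrow> compact (F i A)"
    and F_nonempty: "\<And>i A. i \<ge> 1 \<Longrightarrow> A \<noteq> {} \<Longrightarrow> F i A \<noteq> {}"
    and L_nonneg: "\<And>i. i \<ge> 1 \<Longrightarrow> 0 \<le> L i"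
    and hausdorff_F_le: "\<And>i A B. i \<ge> 1 \<Longrightarrow> compact A \<Longrightarrow> A \<noteq> {} \<Longrightarrow> compact B \<Longrightarrow> B \<noteq> {}
      \<Longrightarrow> hausdorff (F i A) (F i B) \<le> L i * hausdorff A B"
begin

lemma Phi_nonempty_compact:
  assumes "compact A" "A \<noteq> {}"
  shows "compact (Phi F k A) \<and> Phi F k A \<noteq> {}"
  by (induction k) (use assms compact_F F_nonempty in auto)

lemma Psi_nonempty_compact:
  "compact A \<Longrightarrow> A \<noteq> {} \<Longrightarrow> compact (Psi F k A) \<and> Psi F k A \<noteq> {}"
  by (induction k arbitrary: A) (use compact_F F_nonempty in auto)

lemma prod_L_nonneg: "0 \<le> (\<Prod>i=1..k. L i)"
  using L_nonneg by (intro prod_nonneg) auto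

lemma hausdorff_Phi_le:
  assumes A: "compact A" "A \<noteq> {}" and B: "compact B" "B \<noteq> {}"
  shows "hausdorff (Phi F k A) (Phi F k B) \<le> (\<Prod>i=1..k. L i) * hausdorff A B"
proof (induction k)
  case (Suc k)
  have "hausdorff (Phi F (Suc k) A) (Phi F (Suc k) B) \<le> L (Suc k) * hausdorff (Phi F k A) (Phi F k B)"
    using hausdorff_F_le Phi_nonempty_compact[OF A] Phi_nonempty_compact[OF B] by simp
  also have "\<dots> \<le> L (Suc k) * ((\<Prod>i=1..k. L i) * hausdorff A B)"
    using Suc.IH L_nonneg by (intro mult_left_mono) auto
  also have "\<dots> = (\<Prod>i=1..Suc k. L i) * hausdorff A B"
    by (simp add: prod.nat_ivl_Suc' mult_ac)
  finally show ?case .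
qed simp

lemma hausdorff_Psi_le:
  "compact A \<Longrightarrow> A \<noteq> {} \<Longrightarrow> compact B \<Longrightarrow> B \<noteq> {} \<Longrightarrow>
   hausdorff (Psi F k A) (Psi F k B) \<le> (\<Prod>i=1..k. L i) * hausdorff A B"
proof (induction k arbitrary: A B)
  case (Suc k)
  have "hausdorff (Psi F (Suc k) A) (Psi F (Suc k) B)
      \<le> (\<Prod>i=1..k. L i) * hausdorff (F (Suc k) A) (F (Suc k) B)"
    using Suc compact_F F_nonempty by simp
  also have "\<dots> \<le> (\<Prod>i=1..k. L i) * (L (Suc k) * hausdorff A B)"
    using Suc.prems hausdorff_F_le prod_L_nonneg by (intro mult_left_mono) auto
  also have "\<dots> = (\<Prod>i=1..Suc k. L i) * hausdorff A B"
    by (simp add: prod.nat_ivl_Suc' mult_ac)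
  finally show ?case .
qed simp

lemma hausdorff_Phi_Psi_tendsto_0:
  assumes lim: "(\<lambda>k. \<Prod>i=1..k. L i) \<longlonglongrightarrow> 0"
    and A: "compact A" "A \<noteq> {}" and B: "compact B" "B \<noteq> {}"
  shows "(\<lambda>k. hausdorff (Phi F k A) (Phi F k B)) \<longlonglongrightarrow> 0"
    and "(\<lambda>k. hausdorff (Psi F k A) (Psi F k B)) \<longlonglongrightarrow> 0"
proof -
  have bound: "(\<lambda>k. (\<Prod>i=1..k. L i) * hausdorff A B) \<longlonglongrightarrow> 0"
    using tendsto_mult_left_zero[OF lim] .
  show "(\<lambda>k. hausdorff (Phi F k A) (Phi F k B)) \<longlonglongrightarrow> 0"
  proof (rule tendsto_sandwich[OF _ _ tendsto_const bound]; intro always_eventually allI)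
    fix k
    show "0 \<le> hausdorff (Phi F k A) (Phi F k B)"
      using Phi_nonempty_compact[OF A] by (intro hausdorff_nonneg) auto
    show "hausdorff (Phi F k A) (Phi F k B) \<le> (\<Prod>i=1..k. L i) * hausdorff A B"
      using A B by (rule hausdorff_Phi_le)
  qed
  show "(\<lambda>k. hausdorff (Psi F k A) (Psi F k B)) \<longlonglongrightarrow> 0"
  proof (rule tendsto_sandwich[OF _ _ tendsto_const bound]; intro always_eventually allI)
    fix k
    show "0 \<le> hausdorff (Psi F k A) (Psi F k B)"
      using Psi_nonempty_compact[OF A] by (intro hausdorff_nonneg) auto
    show "hausdorff (Psi F k A) (Psi F k B) \<le> (\<Prod>i=1..k. L i) * hausdorff A B"
      using A B by (rule hausdorff_Psi_le)
  qed
qed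

end

lemma hausdorff_lipschitz_family_famap:
  fixes f :: "nat \<Rightarrow> nat \<Rightarrow> 'a::metric_space \<Rightarrow> 'a"
  assumes n_pos: "\<And>i. i \<ge> 1 \<Longrightarrow> n i \<ge> 1"
    and lip: "\<And>i r. i \<ge> 1 \<Longrightarrow> r \<in> {1..n i} \<Longrightarrow> \<exists>C. C-lipschitz_on UNIV (f r i)"
  shows "hausdorff_lipschitz_family (famap f n) (famLip f n)"
proof -
  have lip_famLip: "(famLip f n i)-lipschitz_on UNIV (f r i)"
    if i: "i \<ge> 1" and r: "r \<in> {1..n i}" for i r
  proof -
    obtain C where "C-lipschitz_on UNIV (f r i)" using lip[OF i r] by blast
    then have "(Lip (f r i))-lipschitz_on UNIV (f r i)" by (rule lipschitz_on_Lip)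
    moreover have "Lip (f r i) \<le> famLip f n i"
      unfolding famLip_def using r by (intro Max_ge) auto
    ultimately show ?thesis using lipschitz_on_mono by blast
  qed
  have R: "{1..n i} \<noteq> {}" if "i \<ge> 1" for i using n_pos[OF that] by simp
  show ?thesis
  proof
    fix i :: nat and A B :: "'a set" assume i: "i \<ge> 1"
    show "0 \<le> famLip f n i"
      using lip_famLip[OF i] R[OF i] lipschitz_on_nonneg by blast
    show "A \<noteq> {} \<Longrightarrow> famap f n i A \<noteq> {}"
      unfolding famap_def using R[OF i] by blast
    show "compact (famap f n i A)" if "compact A"
      unfolding famap_def
    proof (intro compact_UN ballI)
      fix r assume "r \<in> {1..n i}"
      then have "continuous_on UNIV (f r i)"
        using lip_famLip[OF i] lipschitz_on_continuous_on by blast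
      then show "compact (f r i ` A)"
        using \<open>compact A\<close> continuous_on_subset compact_continuous_image by blast
    qed simp
    show "compact A \<Longrightarrow> A \<noteq> {} \<Longrightarrow> compact B \<Longrightarrow> B \<noteq> {}
        \<Longrightarrow> hausdorff (famap f n i A) (famap f n i B) \<le> famLip f n i * hausdorff A B"
      unfolding famap_def using lip_famLip[OF i] R[OF i] by (rule hausdorff_UN_image_le)
  qed
qed

theorem mainTheorem5:
  fixes f :: "nat \<Rightarrow> nat \<Rightarrow> 'a::{metric_space, complete_space} \<Rightarrow> 'a"
    and n :: "nat \<Rightarrow> nat"
    and A B :: "'a set"
  assumes n_pos: "\<And>i. i \<ge> 1 \<Longrightarrow> n i \<ge> 1"
    and lip: "\<And>i r. i \<ge> 1 \<Longrightarrow> r \<in> {1..n i} \<Longrightarrow> \<exists>C. C-lipschitz_on UNIV (f r i)"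
    and prod_lim: "(\<lambda>k. \<Prod>i=1..k. famLip f n i) \<longlonglongrightarrow> 0"
    and A: "compact A" "A \<noteq> {}"
    and B: "compact B" "B \<noteq> {}"
  shows "(\<lambda>k. hausdorff (Phi (famap f n) k A) (Phi (famap f n) k B)) \<longlonglongrightarrow> 0 \<and>
         (\<lambda>k. hausdorff (Psi (famap f n) k A) (Psi (famap f n) k B)) \<longlonglongrightarrow> 0"
proof -
  interpret hausdorff_lipschitz_family "famap f n" "famLip f n"
    using n_pos lip by (rule hausdorff_lipschitz_family_famap)
  show ?thesis using hausdorff_Phi_Psi_tendsto_0[OF prod_lim A B] by blast
qed

end
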